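(* Let $V$ be a finite nonempty set and $f:\{0,1\}^V\to\{0,1\}^V$. Every subnetwork of $f$ (in particular $f$ itself) has exactly one fixed point if and only if $f$ has no even-self-dual and no odd-self-dual subnetwork.
   Context: For $x,y\in\{0,1\}^V$, $x\oplus y$ is componentwise addition mod 2, $1$ denotes the all-ones point, and $\|x\|$ is the number of components equal to $1$; $x$ is even (odd) if $\|x\|$ is even (odd). The conjugate of a network $g$ on $W$ is $\tilde g(x)=g(x)\oplus x$. For nonempty $I\subseteq V$ and $z\in\{0,1\}^{V\setminus I}$, the subnetwork of $f$ induced by $z$ is $h:\{0,1\}^I\to\{0,1\}^I$ with $h(x|_I)=f(x)|_I$ for all $x\in\{0,1\}^V$ whose restriction to $V\setminus I$ is $z$ ($f$ is a subnetwork of itself). A network $g$ on $W$ is self-dual if $g(x\oplus 1)=g(x)\oplus 1$ for all $x$; even (odd) if $\tilde g(\{0,1\}^W)$ is exactly the set of even (odd) points; even-self-dual (odd-self-dual) if both even (odd) and self-dual. *)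

theory Defs
  imports Main
begin

text \<open>Points of {0,1}^W are represented as boolean functions on 'v that are False outside W.\<close>
definition pts :: "'v set \<Rightarrow> ('v \<Rightarrow> bool) set" where
  "pts W = {x. \<forall>v. v \<notin> W \<longrightarrow> \<not> x v}"

definition bxor :: "('v \<Rightarrow> bool) \<Rightarrow> ('v \<Rightarrow> bool) \<Rightarrow> ('v \<Rightarrow> bool)" where
  "bxor x y = (\<lambda>v. x v \<noteq> y v)"

definition ones :: "'v set \<Rightarrow> ('v \<Rightarrow> bool)" where
  "ones W = (\<lambda>v. v \<in> W)"

definition weight :: "'v set \<Rightarrow> ('v \<Rightarrow> bool) \<Rightarrow> nat" where
  "weight W x = card {v \<in> W. x v}"

definition network :: "'v set \<Rightarrow> (('v \<Rightarrow> bool) \<Rightarrow> ('v \<Rightarrow> bool)) \<Rightarrow> bool" where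
  "network W g = (\<forall>x \<in> pts W. g x \<in> pts W)"

definition conjugate :: "(('v \<Rightarrow> bool) \<Rightarrow> ('v \<Rightarrow> bool)) \<Rightarrow> ('v \<Rightarrow> bool) \<Rightarrow> ('v \<Rightarrow> bool)" where
  "conjugate g x = bxor (g x) x"

text \<open>Subnetwork of f (on V) induced by z in {0,1}^(V-I): h(x|_I) = f(x)|_I where x|_(V-I) = z.\<close>
definition subnet :: "(('v \<Rightarrow> bool) \<Rightarrow> ('v \<Rightarrow> bool)) \<Rightarrow> 'v set \<Rightarrow> ('v \<Rightarrow> bool)
    \<Rightarrow> ('v \<Rightarrow> bool) \<Rightarrow> ('v \<Rightarrow> bool)" where
  "subnet f I z y = (\<lambda>v. v \<in> I \<and> f (\<lambda>u. if u \<in> I then y u else z u) v)"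

definition self_dual :: "'v set \<Rightarrow> (('v \<Rightarrow> bool) \<Rightarrow> ('v \<Rightarrow> bool)) \<Rightarrow> bool" where
  "self_dual W g = (\<forall>x \<in> pts W. g (bxor x (ones W)) = bxor (g x) (ones W))"

definition even_net :: "'v set \<Rightarrow> (('v \<Rightarrow> bool) \<Rightarrow> ('v \<Rightarrow> bool)) \<Rightarrow> bool" where
  "even_net W g = (conjugate g ` pts W = {x \<in> pts W. even (weight W x)})"

definition odd_net :: "'v set \<Rightarrow> (('v \<Rightarrow> bool) \<Rightarrow> ('v \<Rightarrow> bool)) \<Rightarrow> bool" where
  "odd_net W g = (conjugate g ` pts W = {x \<in> pts W. odd (weight W x)})"

definition even_self_dual :: "'v set \<Rightarrow> (('v \<Rightarrow> bool) \<Rightarrow> ('v \<Rightarrow> bool)) \<Rightarrow> bool" where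
  "even_self_dual W g = (even_net W g \<and> self_dual W g)"

definition odd_self_dual :: "'v set \<Rightarrow> (('v \<Rightarrow> bool) \<Rightarrow> ('v \<Rightarrow> bool)) \<Rightarrow> bool" where
  "odd_self_dual W g = (odd_net W g \<and> self_dual W g)"

end

theory Submission
  imports Defs
begin

text \<open>
Fixed points of a network g are the zeros of its conjugate, so it suffices to show that
the conjugate of every subnetwork is a bijection. Suppose this holds for all immediate
subnetworks of h on I (fix one coordinate i of I to a constant b). Then for every target T
and every i, exactly one y with y i = b is mapped to T up to coordinate i; hence the fiber
sizes of T and of T with bit i flipped add up to 2. So the fiber size of T is N or 2 - N
according to the parity of T, where N is the fiber size of 0. If N = 1 the conjugate is a
bijection. Otherwise the image is one parity class with fibers of size 2, and two points in
a fiber agree in no coordinate (agreeing at i would make them equal), so the fiber of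
g(x) \<oplus> x is {x, x \<oplus> 1}: h is even- or odd-self-dual. Conversely, an even-self-dual
network has the two fixed points x and x \<oplus> 1, and an odd one has none.
\<close>

lemma finite_pts: "finite W \<Longrightarrow> finite (pts W)"
proof -
  assume "finite W"
  have "pts W \<subseteq> (\<lambda>S v. v \<in> S) ` Pow W"
  proof
    fix x assume "x \<in> pts W"
    then have "x = (\<lambda>v. v \<in> {v \<in> W. x v})" by (auto simp: pts_def fun_eq_iff)
    then show "x \<in> (\<lambda>S v. v \<in> S) ` Pow W" by blast
  qed
  then show ?thesis using \<open>finite W\<close> finite_subset by blast
qed

lemma zero_in_pts: "(\<lambda>_. False) \<in> pts W"
  by (simp add: pts_def)

lemma fixed_point_iff_conjugate_zero: "g x = x \<longleftrightarrow> conjugate g x = (\<lambda>_. False)"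
  by (auto simp: conjugate_def bxor_def fun_eq_iff)

lemma agree_off_coordinate_iff:
  "(\<forall>v. v \<noteq> i \<longrightarrow> g v = T v) \<longleftrightarrow> g = T \<or> g = T(i := \<not> T i)"
proof
  assume "\<forall>v. v \<noteq> i \<longrightarrow> g v = T v"
  then show "g = T \<or> g = T(i := \<not> T i)" by (cases "g i = T i") (auto simp: fun_eq_iff)
qed auto

lemma conjugate_subnet_outside:
  "v \<notin> I \<Longrightarrow> conjugate (subnet f I z) y v = y v"
  by (simp add: conjugate_def bxor_def subnet_def)

lemma conjugate_subnet_in_pts:
  "y \<in> pts I \<Longrightarrow> conjugate (subnet f I z) y \<in> pts I"
  by (auto simp: pts_def conjugate_subnet_outside)

lemma conjugate_subnet_off_coordinate:
  assumes "i \<in> I" "v \<noteq> i"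
  shows "conjugate (subnet f I z) y v
       = conjugate (subnet f (I - {i}) (z(i := y i))) (y(i := False)) v"
proof -
  have "(\<lambda>u. if u \<in> I - {i} then (y(i := False)) u else (z(i := y i)) u)
      = (\<lambda>u. if u \<in> I then y u else z u)"
    using assms by (auto simp: fun_eq_iff)
  then show ?thesis using assms by (simp add: conjugate_def bxor_def subnet_def)
qed

lemma bij_conjugate_subnet_empty: "bij_betw (conjugate (subnet f {} z)) (pts {}) (pts {})"
proof -
  have "conjugate (subnet f {} z) = id" by (simp add: conjugate_def bxor_def subnet_def fun_eq_iff)
  then show ?thesis by simp
qed

locale immediate_subnets_bijective =
  fixes f :: "('v \<Rightarrow> bool) \<Rightarrow> ('v \<Rightarrow> bool)" and I :: "'v set" and z :: "'v \<Rightarrow> bool"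
  assumes finite_I: "finite I" and nonempty_I: "I \<noteq> {}"
    and bij_immediate: "\<And>i b. i \<in> I \<Longrightarrow>
      bij_betw (conjugate (subnet f (I - {i}) (z(i := b)))) (pts (I - {i})) (pts (I - {i}))"
begin

abbreviation G :: "('v \<Rightarrow> bool) \<Rightarrow> ('v \<Rightarrow> bool)" where
  "G \<equiv> conjugate (subnet f I z)"

definition fiber_card :: "('v \<Rightarrow> bool) \<Rightarrow> nat" where
  "fiber_card T = card {y \<in> pts I. G y = T}"

lemma unique_preimage_off_coordinate:
  assumes T: "T \<in> pts I" and i: "i \<in> I"
  shows "\<exists>!y. y \<in> pts I \<and> y i = b \<and> (\<forall>v. v \<noteq> i \<longrightarrow> G y v = T v)"
proof -
  let ?g = "conjugate (subnet f (I - {i}) (z(i := b)))"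
  have off: "(\<forall>v. v \<noteq> i \<longrightarrow> G y v = T v) \<longleftrightarrow> ?g (y(i := False)) = T(i := False)"
    if "y i = b" for y
    using conjugate_subnet_off_coordinate[OF i, of _ f z y] conjugate_subnet_outside[of i "I - {i}"]
      that by (auto simp: fun_eq_iff)
  have "T(i := False) \<in> pts (I - {i})" using T by (auto simp: pts_def)
  then obtain w where w: "w \<in> pts (I - {i})" "?g w = T(i := False)"
    using bij_immediate[OF i] by (metis bij_betw_def imageE)
  have "w i = False" using w(1) by (simp add: pts_def)
  then have w_upd: "(w(i := b))(i := False) = w" by (simp add: fun_eq_iff)
  show ?thesis
  proof (rule ex1I)
    show "w(i := b) \<in> pts I \<and> (w(i := b)) i = b \<and> (\<forall>v. v \<noteq> i \<longrightarrow> G (w(i := b)) v = T v)"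
      using w i off[of "w(i := b)"] w_upd by (auto simp: pts_def)
  next
    fix y assume y: "y \<in> pts I \<and> y i = b \<and> (\<forall>v. v \<noteq> i \<longrightarrow> G y v = T v)"
    have "y(i := False) \<in> pts (I - {i})" using y by (auto simp: pts_def)
    moreover have "?g (y(i := False)) = ?g w" using y off[of y] w(2) by simp
    ultimately have "y(i := False) = w"
      using w(1) bij_immediate[OF i] by (metis bij_betw_def inj_onD)
    then show "y = w(i := b)" using y by (auto simp: fun_eq_iff split: if_splits)
  qed
qed

lemma eq_if_same_image_and_coordinate:
  assumes "x \<in> pts I" "x' \<in> pts I" "G x = G x'" "i \<in> I" "x i = x' i"
  shows "x = x'"
  using unique_preimage_off_coordinate[OF conjugate_subnet_in_pts[OF assms(1)] assms(4), of "x i"]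
    assms by metis

lemma fiber_card_flip:
  assumes T: "T \<in> pts I" and i: "i \<in> I"
  shows "fiber_card T + fiber_card (T(i := \<not> T i)) = 2"
proof -
  define S where "S b = {y \<in> pts I. y i = b \<and> (\<forall>v. v \<noteq> i \<longrightarrow> G y v = T v)}" for b
  have "card (S b) = 1" for b
  proof -
    obtain y where "y \<in> S b" and "\<And>y'. y' \<in> S b \<Longrightarrow> y' = y"
      using unique_preimage_off_coordinate[OF T i, of b] unfolding S_def by (elim ex1E) blast
    then have "S b = {y}" by blast
    then show ?thesis by simp
  qed
  moreover have "S False \<inter> S True = {}" by (auto simp: S_def)
  moreover have "finite (S b)" for b using finite_pts[OF finite_I] by (simp add: S_def)
  ultimately have "card (S False \<union> S True) = 2" by (simp add: card_Un_disjoint)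
  moreover have "S False \<union> S True = {y \<in> pts I. G y = T} \<union> {y \<in> pts I. G y = T(i := \<not> T i)}"
    by (auto simp: S_def agree_off_coordinate_iff)
  moreover have "{y \<in> pts I. G y = T} \<inter> {y \<in> pts I. G y = T(i := \<not> T i)} = {}"
    by (auto dest: fun_cong[of _ _ i])
  ultimately show ?thesis
    using finite_pts[OF finite_I] by (simp add: fiber_card_def card_Un_disjoint)
qed

lemma fiber_card_zero_le_2: "fiber_card (\<lambda>_. False) \<le> 2"
  using fiber_card_flip[OF zero_in_pts] nonempty_I by (metis ex_in_conv le_add1)

lemma fiber_card_by_parity:
  "T \<in> pts I \<Longrightarrow> fiber_card T =
     (if even (weight I T) then fiber_card (\<lambda>_. False) else 2 - fiber_card (\<lambda>_. False))"
proof (induction "weight I T" arbitrary: T)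
  case 0
  then have "T = (\<lambda>_. False)" using finite_I by (auto simp: weight_def pts_def fun_eq_iff)
  then show ?case by (simp add: weight_def)
next
  case (Suc k)
  then obtain i where i: "i \<in> I" "T i"
    by (metis (no_types, lifting) Collect_empty_eq card.empty nat.distinct(1) weight_def)
  let ?T' = "T(i := False)"
  have T': "?T' \<in> pts I" using Suc.prems by (auto simp: pts_def)
  have "{v \<in> I. ?T' v} = {v \<in> I. T v} - {i}" by auto
  then have "weight I ?T' = k" using Suc.hyps(2) i finite_I by (simp add: weight_def)
  then have IH: "fiber_card ?T' =
      (if even k then fiber_card (\<lambda>_. False) else 2 - fiber_card (\<lambda>_. False))"
    using Suc.hyps(1) T' by blast
  have "T = ?T'(i := \<not> ?T' i)" using i by (auto simp: fun_eq_iff)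
  then have "fiber_card ?T' + fiber_card T = 2" using fiber_card_flip[OF T' i(1)] by simp
  then show ?case using IH fiber_card_zero_le_2 Suc.hyps(2)[symmetric] by auto
qed

lemma fiber_card_image_nonzero: "y \<in> pts I \<Longrightarrow> fiber_card (G y) \<noteq> 0"
  using finite_pts[OF finite_I] by (auto simp: fiber_card_def)

lemma self_dual_if_fibers_pairs:
  assumes "\<forall>y \<in> pts I. fiber_card (G y) = 2"
  shows "self_dual I (subnet f I z)"
  unfolding self_dual_def
proof
  fix x assume x: "x \<in> pts I"
  have "card {y \<in> pts I. G y = G x} = 2" using assms x by (simp add: fiber_card_def)
  then obtain x' where x': "x' \<in> pts I" "G x' = G x" "x' \<noteq> x"
    by (auto simp: card_2_iff)
  have "x' = bxor x (ones I)"
  proof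
    fix v show "x' v = bxor x (ones I) v"
    proof (cases "v \<in> I")
      case True
      then have "x' v \<noteq> x v" using eq_if_same_image_and_coordinate[OF x'(1) x] x' by blast
      then show ?thesis using True by (simp add: bxor_def ones_def)
    qed (use x x'(1) in \<open>auto simp: pts_def bxor_def ones_def\<close>)
  qed
  then have "G (bxor x (ones I)) = G x" using x'(2) by simp
  then show "subnet f I z (bxor x (ones I)) = bxor (subnet f I z x) (ones I)"
    unfolding conjugate_def bxor_def fun_eq_iff by metis
qed

lemma bij_if_balanced:
  assumes "fiber_card (\<lambda>_. False) = 1"
  shows "bij_betw G (pts I) (pts I)"
proof -
  have fiber: "card {y \<in> pts I. G y = G x} = 1" if "x \<in> pts I" for x
    using fiber_card_by_parity[OF conjugate_subnet_in_pts[OF that]] assms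
    by (simp add: fiber_card_def)
  have inj: "inj_on G (pts I)"
  proof (rule inj_onI)
    fix x x' assume "x \<in> pts I" "x' \<in> pts I" "G x = G x'"
    then have "x \<in> {y \<in> pts I. G y = G x}" "x' \<in> {y \<in> pts I. G y = G x}" by auto
    then show "x = x'" using fiber[of x] \<open>x \<in> pts I\<close> by (metis card_1_singletonE singletonD)
  qed
  then have "G ` pts I = pts I"
    using endo_inj_surj[OF finite_pts[OF finite_I]] conjugate_subnet_in_pts by blast
  with inj show ?thesis by (simp add: bij_betw_def)
qed

lemma unbalanced_self_dual_parity_net:
  assumes "fiber_card (\<lambda>_. False) \<noteq> 1"
  shows "self_dual I (subnet f I z)"
    and "G ` pts I = {T \<in> pts I. even (weight I T) \<longleftrightarrow> fiber_card (\<lambda>_. False) = 2}"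
proof -
  let ?N0 = "fiber_card (\<lambda>_. False)"
  have N0: "?N0 = 0 \<or> ?N0 = 2" using fiber_card_zero_le_2 assms by auto
  have fiber: "fiber_card T = (if even (weight I T) \<longleftrightarrow> ?N0 = 2 then 2 else 0)"
    if "T \<in> pts I" for T
    using fiber_card_by_parity[OF that] N0 by (elim disjE) simp_all
  have image: "fiber_card (G y) = 2 \<and> (even (weight I (G y)) \<longleftrightarrow> ?N0 = 2)" if "y \<in> pts I" for y
    using fiber[OF conjugate_subnet_in_pts[OF that]] fiber_card_image_nonzero[OF that]
    by (simp split: if_splits)
  show "self_dual I (subnet f I z)" using image by (blast intro: self_dual_if_fibers_pairs)
  show "G ` pts I = {T \<in> pts I. even (weight I T) \<longleftrightarrow> ?N0 = 2}"
  proof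
    show "G ` pts I \<subseteq> {T \<in> pts I. even (weight I T) \<longleftrightarrow> ?N0 = 2}"
      using image conjugate_subnet_in_pts by blast
    show "{T \<in> pts I. even (weight I T) \<longleftrightarrow> ?N0 = 2} \<subseteq> G ` pts I"
    proof
      fix T assume "T \<in> {T \<in> pts I. even (weight I T) \<longleftrightarrow> ?N0 = 2}"
      then have "fiber_card T \<noteq> 0" using fiber by auto
      then have "{y \<in> pts I. G y = T} \<noteq> {}" unfolding fiber_card_def by force
      then show "T \<in> G ` pts I" by blast
    qed
  qed
qed

theorem bij_conjugate_if_not_self_dual:
  assumes "\<not> even_self_dual I (subnet f I z)" and "\<not> odd_self_dual I (subnet f I z)"
  shows "bij_betw G (pts I) (pts I)"
proof (rule ccontr)
  assume "\<not> ?thesis"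
  then have unbalanced: "fiber_card (\<lambda>_. False) \<noteq> 1" using bij_if_balanced by blast
  show False
  proof (cases "fiber_card (\<lambda>_. False) = 2")
    case True
    then have "even_net I (subnet f I z)"
      using unbalanced_self_dual_parity_net(2)[OF unbalanced] by (simp add: even_net_def)
    then show False using assms(1) unbalanced_self_dual_parity_net(1)[OF unbalanced]
      by (simp add: even_self_dual_def)
  next
    case False
    then have "odd_net I (subnet f I z)"
      using unbalanced_self_dual_parity_net(2)[OF unbalanced] by (simp add: odd_net_def)
    then show False using assms(2) unbalanced_self_dual_parity_net(1)[OF unbalanced]
      by (simp add: odd_self_dual_def)
  qed
qed

end

lemma bij_conjugate_subnet_if_no_self_dual:
  assumes "finite V"
    and no_self_dual: "\<And>I z. I \<noteq> {} \<Longrightarrow> I \<subseteq> V \<Longrightarrow> z \<in> pts (V - I) \<Longrightarrow>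
      \<not> (even_self_dual I (subnet f I z) \<or> odd_self_dual I (subnet f I z))"
    and "I \<subseteq> V" and "z \<in> pts (V - I)"
  shows "bij_betw (conjugate (subnet f I z)) (pts I) (pts I)"
proof -
  have "finite I" using assms(1,3) finite_subset by blast
  then show ?thesis using assms(3,4)
  proof (induction I arbitrary: z rule: finite_psubset_induct)
    case (psubset I)
    show ?case
    proof (cases "I = {}")
      case True
      then show ?thesis using bij_conjugate_subnet_empty by simp
    next
      case False
      interpret immediate_subnets_bijective f I z
      proof
        fix i b assume "i \<in> I"
        moreover have "z(i := b) \<in> pts (V - (I - {i}))" using psubset.prems \<open>i \<in> I\<close> by (auto simp: pts_def)
        ultimately show "bij_betw (conjugate (subnet f (I - {i}) (z(i := b)))) (pts (I - {i})) (pts (I - {i}))"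
          using psubset.IH psubset.prems(1) by blast
      qed (use psubset.hyps False in auto)
      show ?thesis
        using bij_conjugate_if_not_self_dual no_self_dual[OF False psubset.prems] by blast
    qed
  qed
qed

lemma card_fixed_points_if_bij_conjugate:
  assumes "bij_betw (conjugate g) (pts W) (pts W)"
  shows "card {x \<in> pts W. g x = x} = 1"
proof -
  obtain a where a: "a \<in> pts W" "conjugate g a = (\<lambda>_. False)"
    using assms zero_in_pts by (metis bij_betw_def imageE)
  have "x = a" if "x \<in> pts W" "g x = x" for x
    using that a assms fixed_point_iff_conjugate_zero[of g x] by (metis bij_betw_def inj_onD)
  then have "{x \<in> pts W. g x = x} = {a}" using a fixed_point_iff_conjugate_zero[of g a] by blast
  then show ?thesis by simp
qed

lemma two_fixed_points_if_even_self_dual: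
  assumes "finite W" "W \<noteq> {}" "even_self_dual W g"
  shows "card {x \<in> pts W. g x = x} \<ge> 2"
proof -
  have "(\<lambda>_. False) \<in> conjugate g ` pts W"
    using assms(3) zero_in_pts by (simp add: even_self_dual_def even_net_def weight_def)
  then obtain x where x: "x \<in> pts W" "g x = x" using fixed_point_iff_conjugate_zero by (metis imageE)
  let ?x' = "bxor x (ones W)"
  have "?x' \<in> pts W" "g ?x' = ?x'"
    using assms(3) x by (auto simp: pts_def bxor_def ones_def even_self_dual_def self_dual_def)
  moreover have "?x' \<noteq> x" using assms(2) by (auto simp: bxor_def ones_def fun_eq_iff)
  ultimately have "{x, ?x'} \<subseteq> {x \<in> pts W. g x = x}" and "card {x, ?x'} = 2" using x by auto
  moreover have "finite {x \<in> pts W. g x = x}" using finite_pts[OF assms(1)] by simp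
  ultimately show ?thesis by (metis card_mono)
qed

lemma no_fixed_point_if_odd_net:
  assumes "odd_net W g"
  shows "{x \<in> pts W. g x = x} = {}"
proof -
  have "(\<lambda>_. False) \<notin> conjugate g ` pts W" using assms by (simp add: odd_net_def weight_def)
  then show ?thesis by (force simp: fixed_point_iff_conjugate_zero)
qed

theorem corollary2:
  fixes V :: "'v set" and f :: "('v \<Rightarrow> bool) \<Rightarrow> ('v \<Rightarrow> bool)"
  assumes "finite V" and "V \<noteq> {}" and "network V f"
  shows "(\<forall>I z. I \<noteq> {} \<and> I \<subseteq> V \<and> z \<in> pts (V - I) \<longrightarrow>
            card {x \<in> pts I. subnet f I z x = x} = 1)
     \<longleftrightarrow> \<not> (\<exists>I z. I \<noteq> {} \<and> I \<subseteq> V \<and> z \<in> pts (V - I) \<and>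
            (even_self_dual I (subnet f I z) \<or> odd_self_dual I (subnet f I z)))"
proof
  assume unique: "\<forall>I z. I \<noteq> {} \<and> I \<subseteq> V \<and> z \<in> pts (V - I) \<longrightarrow>
            card {x \<in> pts I. subnet f I z x = x} = 1"
  show "\<not> (\<exists>I z. I \<noteq> {} \<and> I \<subseteq> V \<and> z \<in> pts (V - I) \<and>
            (even_self_dual I (subnet f I z) \<or> odd_self_dual I (subnet f I z)))"
  proof
    assume "\<exists>I z. I \<noteq> {} \<and> I \<subseteq> V \<and> z \<in> pts (V - I) \<and>
            (even_self_dual I (subnet f I z) \<or> odd_self_dual I (subnet f I z))"
    then obtain I z where I: "I \<noteq> {}" "I \<subseteq> V" "z \<in> pts (V - I)"
      and self_dual: "even_self_dual I (subnet f I z) \<or> odd_self_dual I (subnet f I z)" by blast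
    have unique_I: "card {x \<in> pts I. subnet f I z x = x} = 1" using unique I by blast
    have "finite I" using I(2) assms(1) finite_subset by blast
    from self_dual show False
    proof
      assume "even_self_dual I (subnet f I z)"
      then show False
        using two_fixed_points_if_even_self_dual[OF \<open>finite I\<close> I(1)] unique_I by fastforce
    next
      assume "odd_self_dual I (subnet f I z)"
      then show False using no_fixed_point_if_odd_net unique_I by (fastforce simp: odd_self_dual_def)
    qed
  qed
next
  assume none: "\<not> (\<exists>I z. I \<noteq> {} \<and> I \<subseteq> V \<and> z \<in> pts (V - I) \<and>
            (even_self_dual I (subnet f I z) \<or> odd_self_dual I (subnet f I z)))"
  show "\<forall>I z. I \<noteq> {} \<and> I \<subseteq> V \<and> z \<in> pts (V - I) \<longrightarrow>
            card {x \<in> pts I. subnet f I z x = x} = 1"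
  proof (intro allI impI)
    fix I z assume "I \<noteq> {} \<and> I \<subseteq> V \<and> z \<in> pts (V - I)"
    then have "bij_betw (conjugate (subnet f I z)) (pts I) (pts I)"
      using bij_conjugate_subnet_if_no_self_dual[OF assms(1)] none by blast
    then show "card {x \<in> pts I. subnet f I z x = x} = 1"
      by (rule card_fixed_points_if_bij_conjugate)
  qed
qed

end
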